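(* Let $q \ge 2$ be a fixed integer and let $\Sigma$ be an alphabet with $|\Sigma| = q$. There exist constants $c > 0$ and $n_0$ (which may depend on $q$) such that for every integer $n \ge n_0$, the number of privileged words of length $n$ over $\Sigma$ is at least \[ \frac{c\, q^n}{n (\log_q n)^2}. \]
   Context: A border of a word $w$ is a non-empty word that is both a prefix and a suffix of $w$. A word $w$ is privileged if either $|w| \le 1$, or $|w| \ge 2$ and $w$ has a border $u$ which is itself privileged and which occurs exactly twice as a factor (contiguous subword) of $w$ (i.e., only as the prefix and as the suffix, these being two distinct occurrences). The claim is meant for fixed $q$, with the constants allowed to depend on $q$. *)

theory Defs
  imports Complex_Main "HOL-Library.Sublist"
begin

definition is_border :: "'a list \<Rightarrow> 'a list \<Rightarrow> bool" where
  "is_border u w \<longleftrightarrow> u \<noteq> [] \<and> prefix u w \<and> suffix u w"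

definition occ_count :: "'a list \<Rightarrow> 'a list \<Rightarrow> nat" where
  "occ_count u w = card {i. i + length u \<le> length w \<and> take (length u) (drop i w) = u}"

function privileged :: "'a list \<Rightarrow> bool" where
  "privileged w \<longleftrightarrow> length w \<le> 1 \<or>
     (\<exists>u\<in>{u. length u < length w}. is_border u w \<and> privileged u \<and> occ_count u w = 2)"
  by auto
termination
  by (relation "measure length") auto

end

theory Submission
  imports Defs "HOL-Library.Log_Nat" "HOL-Library.FuncSet" "HOL-Library.Cardinality"
begin

text \<open>Fix letters \<open>a \<noteq> b\<close>. If \<open>u\<close> is privileged, starts and ends with \<open>a\<^sup>k\<close>, and \<open>v\<close> starts
  and ends with \<open>b\<close>, then \<open>u v u\<close> is privileged as soon as \<open>u\<close> occurs in it only as prefix and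
  suffix. The \<open>b\<close>'s rule out occurrences overlapping the ends of \<open>v\<close> by at most \<open>k\<close> letters;
  every other occurrence fixes more than \<open>k\<close> (or all \<open>|u|\<close>) letters of \<open>v\<close>, so a union bound
  shows that at least half of all \<open>v\<close> are good when \<open>q\<^sup>k \<gg> |u|\<close> and \<open>q\<^bsup>|u|\<^esup> \<gg> |v|\<close>.
  Two rounds of this, starting from \<open>a\<^sup>k\<close> with \<open>k \<approx> log\<^sub>q log\<^sub>q n\<close> and then from words of
  length \<open>l \<approx> log\<^sub>q n\<close>, give at least \<open>q\<^sup>n / (4 q\<^bsup>l+2k+4\<^esup>) \<ge> c q\<^sup>n / (n l\<^sup>2)\<close> privileged
  words of length \<open>n\<close>.\<close>

declare privileged.simps[simp del] \<comment> \<open>the recursive equation loops in the simplifier\<close>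

definition occurs_at :: "'a list \<Rightarrow> 'a list \<Rightarrow> nat \<Rightarrow> bool" where
  "occurs_at u w p \<longleftrightarrow> p + length u \<le> length w \<and> take (length u) (drop p w) = u"

lemma occurs_at_nth:
  assumes "occurs_at u w p" "i < length u"
  shows "w ! (p + i) = u ! i"
proof -
  have "take (length u) (drop p w) ! i = u ! i"
    using assms(1) unfolding occurs_at_def by simp
  then show ?thesis using assms by (simp add: occurs_at_def)
qed

lemma privileged_replicate: "privileged (replicate k a)"
proof (induction k)
  case 0
  show ?case by (subst privileged.simps) simp
next
  case (Suc k)
  show ?case
  proof (cases "k = 0")
    case True
    then show ?thesis by (subst privileged.simps) simp
  next
    case False
    have "take k (drop i (replicate (Suc k) a)) = replicate (min k (Suc k - i)) a" for i
      by (simp only: drop_replicate take_replicate)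
    then have "{i. i + k \<le> Suc k \<and> take k (drop i (replicate (Suc k) a)) = replicate k a} = {0, 1}"
      using False by (auto simp: min_def)
    then have "occ_count (replicate k a) (replicate (Suc k) a) = 2"
      unfolding occ_count_def by simp
    moreover have "is_border (replicate k a) (replicate (Suc k) a)"
    proof -
      have "prefix (replicate k a) (replicate (Suc k) a)"
        unfolding prefix_def by (rule exI[of _ "[a]"]) (simp add: replicate_append_same)
      moreover have "suffix (replicate k a) (replicate (Suc k) a)"
        unfolding suffix_def by (rule exI[of _ "[a]"]) simp
      ultimately show ?thesis using False unfolding is_border_def by simp
    qed
    ultimately show ?thesis
      using Suc.IH by (subst privileged.simps) auto
  qed
qed

lemma privileged_square_with_middle:
  assumes "privileged u" "u \<noteq> []"
    and "{p. occurs_at u (u @ v @ u) p} = {0, length u + length v}"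
  shows "privileged (u @ v @ u)"
proof -
  have "is_border u (u @ v @ u)"
    using assms(2) unfolding is_border_def by (simp add: suffix_def)
  moreover have "occ_count u (u @ v @ u) = 2"
    using assms(2,3) unfolding occ_count_def occurs_at_def[abs_def] by simp
  ultimately show ?thesis
    using assms(1,2) unfolding privileged.simps[of "u @ v @ u"] by (intro disjI2 bexI[of _ u]) auto
qed

lemma prefix_replicate_nth: "prefix (replicate k a) u \<Longrightarrow> j < k \<Longrightarrow> u ! j = a"
  by (auto simp: prefix_def nth_append)

lemma suffix_replicate_nth: "suffix (replicate k a) u \<Longrightarrow> j < k \<Longrightarrow> u ! (length u - k + j) = a"
  by (auto simp: suffix_def nth_append)

definition framed_privileged :: "nat \<Rightarrow> 'a \<Rightarrow> nat \<Rightarrow> 'a list set" where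
  "framed_privileged k a n =
     {w. length w = n \<and> privileged w \<and> prefix (replicate k a) w \<and> suffix (replicate k a) w}"

text \<open>Positions \<open>\<le> k\<close> and \<open>\<ge> |u| + m - k\<close> need not be excluded: see \<open>occurs_at_good_middle\<close>.\<close>
definition good_middles :: "'a list \<Rightarrow> nat \<Rightarrow> 'a \<Rightarrow> nat \<Rightarrow> 'a list set" where
  "good_middles u k b m =
     {v \<in> (\<lambda>w. b # w @ [b]) ` {w. length w = m - 2}.
        \<forall>p\<in>{k<..<length u + m - k}. \<not> occurs_at u (u @ v @ u) p}"

lemma occurs_at_good_middle:
  assumes pre: "prefix (replicate k a) u" and suf: "suffix (replicate k a) u"
    and "b \<noteq> a" "2 \<le> m" and v: "v \<in> good_middles u k b m" and occ: "occurs_at u (u @ v @ u) p"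
  shows "p = 0 \<or> p = length u + m"
proof (rule ccontr)
  assume p: "\<not> (p = 0 \<or> p = length u + m)"
  define L where "L = length u"
  obtain w where vw: "v = b # w @ [b]" and "length w = m - 2"
    and inner: "\<forall>p\<in>{k<..<L + m - k}. \<not> occurs_at u (u @ v @ u) p"
    using v unfolding good_middles_def L_def by blast
  then have lv: "length v = m" using \<open>2 \<le> m\<close> by simp
  have "k \<le> L" using prefix_length_le[OF pre] unfolding L_def by simp
  have "p \<le> L + m" using occ lv unfolding occurs_at_def L_def by simp
  consider "p \<le> k" | "L + m - k \<le> p" | "k < p \<and> p < L + m - k" by linarith
  then show False
  proof cases
    case 1
    \<comment> \<open>the occurrence would put a letter of the suffix frame of u over the first b of v\<close>
    have "(u @ v @ u) ! (p + (L - p)) = u ! (L - p)"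
      by (rule occurs_at_nth[OF occ]) (use p 1 \<open>k \<le> L\<close> in \<open>unfold L_def, linarith\<close>)
    moreover have "(u @ v @ u) ! (p + (L - p)) = b"
      using 1 \<open>k \<le> L\<close> vw unfolding L_def by (simp add: nth_append)
    moreover have "u ! (L - p) = a"
      using suffix_replicate_nth[OF suf, of "k - p"] 1 p \<open>k \<le> L\<close> unfolding L_def by simp
    ultimately show False using \<open>b \<noteq> a\<close> by simp
  next
    case 2
    have "m - 1 = Suc (length w)"
      using \<open>length w = m - 2\<close> \<open>2 \<le> m\<close> by simp
    then have "v ! (m - 1) = b" using vw by (simp add: nth_append)
    have "(u @ v @ u) ! (L + (m - 1)) = (v @ u) ! (m - 1)"
      unfolding L_def by (rule nth_append_length_plus)
    also have "\<dots> = b"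
      using \<open>v ! (m - 1) = b\<close> lv \<open>2 \<le> m\<close> by (simp add: nth_append)
    also have "L + (m - 1) = p + (L + m - 1 - p)"
      using p \<open>p \<le> L + m\<close> \<open>2 \<le> m\<close> unfolding L_def by linarith
    also have "(u @ v @ u) ! \<dots> = u ! (L + m - 1 - p)"
      by (rule occurs_at_nth[OF occ])
        (use p 2 \<open>p \<le> L + m\<close> \<open>k \<le> L\<close> in \<open>unfold L_def, linarith\<close>)
    also have "\<dots> = a"
      by (rule prefix_replicate_nth[OF pre])
        (use p 2 \<open>p \<le> L + m\<close> in \<open>unfold L_def, linarith\<close>)
    finally show False using \<open>b \<noteq> a\<close> by simp
  next
    case 3
    then show False using inner occ by auto
  qed
qed

lemma good_middle_extends_framed_privileged:
  assumes u: "u \<in> framed_privileged k a L" and "1 \<le> k" "b \<noteq> a" "2 \<le> m"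
    and v: "v \<in> good_middles u k b m"
  shows "u @ v @ u \<in> framed_privileged k a (2 * L + m)"
proof -
  have pre: "prefix (replicate k a) u" and suf: "suffix (replicate k a) u"
    and "privileged u" and L: "length u = L"
    using u unfolding framed_privileged_def by auto
  have lv: "length v = m" using v \<open>2 \<le> m\<close> unfolding good_middles_def by auto
  have "u \<noteq> []" using prefix_length_le[OF pre] \<open>1 \<le> k\<close> by auto
  have "{p. occurs_at u (u @ v @ u) p} = {0, length u + length v}"
    using occurs_at_good_middle[OF pre suf \<open>b \<noteq> a\<close> \<open>2 \<le> m\<close> v] lv
    by (auto simp: occurs_at_def)
  then have "privileged (u @ v @ u)"
    by (rule privileged_square_with_middle[OF \<open>privileged u\<close> \<open>u \<noteq> []\<close>])
  moreover have "prefix (replicate k a) (u @ v @ u)" using pre prefix_prefix by blast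
  moreover have "suffix (replicate k a) (u @ v @ u)" using suf suffix_appendI by blast
  ultimately show ?thesis using L lv unfolding framed_privileged_def by simp
qed

lemma card_lists_fixed_nth_le:
  assumes "J \<subseteq> {..<m}"
  shows "card {v :: 'a::finite list. length v = m \<and> (\<forall>j\<in>J. v ! j = f j)} \<le> CARD('a) ^ (m - card J)"
proof -
  define I where "I = {..<m} - J"
  define S where "S = {v :: 'a list. length v = m \<and> (\<forall>j\<in>J. v ! j = f j)}"
  have "inj_on (\<lambda>v. restrict ((!) v) I) S"
  proof (rule inj_onI)
    fix v w assume "v \<in> S" "w \<in> S" and eq: "restrict ((!) v) I = restrict ((!) w) I"
    show "v = w"
    proof (rule nth_equalityI)
      show "length v = length w" using \<open>v \<in> S\<close> \<open>w \<in> S\<close> unfolding S_def by simp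
      show "v ! i = w ! i" if "i < length v" for i
        using that \<open>v \<in> S\<close> \<open>w \<in> S\<close> fun_cong[OF eq, of i] unfolding S_def I_def
        by (cases "i \<in> J") auto
    qed
  qed
  moreover have "(\<lambda>v. restrict ((!) v) I) ` S \<subseteq> PiE I (\<lambda>_. UNIV)" by auto
  ultimately have "card S \<le> card (PiE I (\<lambda>_. UNIV :: 'a set))"
    by (intro card_inj_on_le) (auto simp: I_def intro: finite_PiE)
  also have "\<dots> = CARD('a) ^ (m - card J)"
    using assms finite_subset[OF assms] by (simp add: card_PiE I_def card_Diff_subset)
  finally show ?thesis unfolding S_def .
qed

text \<open>An occurrence of \<open>u\<close> at position \<open>p\<close> of \<open>u @ v @ u\<close> fixes the letters of
  \<open>v\<close> at the positions \<open>p - length u ..< min m p\<close>.\<close>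
lemma card_occurs_at_le:
  fixes u :: "'a::finite list"
  shows "card {v. length v = m \<and> occurs_at u (u @ v @ u) p}
           \<le> CARD('a) ^ (m - (min m p - (p - length u)))"
proof -
  define L where "L = length u"
  define J where "J = {p - L..<min m p}"
  have "{v. length v = m \<and> occurs_at u (u @ v @ u) p}
          \<subseteq> {v. length v = m \<and> (\<forall>j\<in>J. v ! j = u ! (L + j - p))}"
  proof
    fix v assume "v \<in> {v. length v = m \<and> occurs_at u (u @ v @ u) p}"
    then have lv: "length v = m" and occ: "occurs_at u (u @ v @ u) p" by auto
    have "v ! j = u ! (L + j - p)" if "j \<in> J" for j
    proof -
      have j: "p - L \<le> j" "j < m" "j < p" using that unfolding J_def by auto
      have "p + (L + j - p) = L + j" using j by linarith
      have "v ! j = (u @ v @ u) ! (L + j)"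
        using j lv unfolding L_def by (simp add: nth_append)
      also have "\<dots> = (u @ v @ u) ! (p + (L + j - p))"
        using \<open>p + (L + j - p) = L + j\<close> by simp
      also have "\<dots> = u ! (L + j - p)"
        by (rule occurs_at_nth[OF occ]) (use j in \<open>unfold L_def, linarith\<close>)
      finally show ?thesis .
    qed
    then show "v \<in> {v. length v = m \<and> (\<forall>j\<in>J. v ! j = u ! (L + j - p))}" using lv by auto
  qed
  moreover have "finite {v :: 'a list. length v = m \<and> (\<forall>j\<in>J. v ! j = u ! (L + j - p))}"
    by (rule finite_subset[OF _ finite_list_length[of m]]) auto
  ultimately have "card {v. length v = m \<and> occurs_at u (u @ v @ u) p}
      \<le> card {v :: 'a list. length v = m \<and> (\<forall>j\<in>J. v ! j = u ! (L + j - p))}"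
    by (rule card_mono[rotated])
  also have "\<dots> \<le> CARD('a) ^ (m - card J)"
    by (rule card_lists_fixed_nth_le) (auto simp: J_def)
  finally show ?thesis by (simp add: J_def L_def)
qed

lemma sum_card_occurs_at_le:
  fixes u :: "'a::finite list"
  assumes "length u \<le> m"
  shows "(\<Sum>p\<in>{k<..<length u + m - k}. card {v. length v = m \<and> occurs_at u (u @ v @ u) p})
           \<le> 2 * length u * CARD('a) ^ (m - k - 1) + (m + 1) * CARD('a) ^ (m - length u)"
proof -
  define L where "L = length u"
  define N where "N p = card {v. length v = m \<and> occurs_at u (u @ v @ u) p}" for p
  define P1 where "P1 = {p\<in>{k<..<L + m - k}. p < L \<or> m < p}"
  define P2 where "P2 = {p\<in>{k<..<L + m - k}. L \<le> p \<and> p \<le> m}"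
  have q: "0 < CARD('a)" by simp
  \<comment> \<open>near the ends of \<open>v\<close> the occurrence still overlaps \<open>v\<close> in more than \<open>k\<close> letters\<close>
  have "N p \<le> CARD('a) ^ (m - k - 1)" if "p \<in> P1" for p
  proof -
    have "k + 1 \<le> min m p - (p - L)" using that assms unfolding P1_def L_def by auto
    then have "CARD('a) ^ (m - (min m p - (p - L))) \<le> CARD('a) ^ (m - k - 1)"
      using q by (intro power_increasing) auto
    then show ?thesis
      using card_occurs_at_le[of m u p] unfolding N_def L_def by linarith
  qed
  then have "sum N P1 \<le> card P1 * CARD('a) ^ (m - k - 1)"
    using sum_bounded_above[of P1 N] by simp
  also have "card P1 \<le> 2 * L"
  proof -
    have "P1 \<subseteq> {..<L} \<union> {m<..<L + m}" unfolding P1_def by auto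
    then have "card P1 \<le> card ({..<L} \<union> {m<..<L + m})" by (rule card_mono[rotated]) auto
    also have "\<dots> \<le> card {..<L} + card {m<..<L + m}" by (rule card_Un_le)
    finally show ?thesis by simp
  qed
  finally have 1: "sum N P1 \<le> 2 * L * CARD('a) ^ (m - k - 1)" by (simp add: mult_right_mono)
  have "N p \<le> CARD('a) ^ (m - L)" if "p \<in> P2" for p
    using that card_occurs_at_le[of m u p] unfolding P2_def N_def L_def by auto
  then have "sum N P2 \<le> card P2 * CARD('a) ^ (m - L)"
    using sum_bounded_above[of P2 N] by simp
  also have "card P2 \<le> m + 1"
    using card_mono[of "{..m}" P2] unfolding P2_def by auto
  finally have 2: "sum N P2 \<le> (m + 1) * CARD('a) ^ (m - L)" by (simp add: mult_right_mono)
  have "{k<..<L + m - k} = P1 \<union> P2" unfolding P1_def P2_def by auto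
  moreover have "sum N (P1 \<union> P2) = sum N P1 + sum N P2"
    by (rule sum.union_disjoint) (auto simp: P1_def P2_def)
  ultimately have "sum N {k<..<L + m - k} = sum N P1 + sum N P2" by simp
  with 1 2 show ?thesis unfolding N_def L_def by linarith
qed

lemma card_good_middles_ge:
  fixes u :: "'a::finite list"
  assumes "k < m" "2 \<le> length u" "length u \<le> m"
    and short: "8 * length u \<le> CARD('a) ^ (k - 1)" and long: "4 * (m + 1) \<le> CARD('a) ^ (length u - 2)"
  shows "CARD('a) ^ (m - 2) \<le> 2 * card (good_middles u k b m)"
proof -
  define q where "q = CARD('a)"
  define L where "L = length u"
  define C where "C = (\<lambda>w. b # w @ [b]) ` {w :: 'a list. length w = m - 2}"
  define Bad where "Bad p = {v. length v = m \<and> occurs_at u (u @ v @ u) p}" for p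
  have "k \<noteq> 0" using short \<open>2 \<le> length u\<close> by (cases k) auto
  have "card C = q ^ (m - 2)"
    using card_lists_length_eq[of "UNIV :: 'a set" "m - 2"] unfolding C_def q_def
    by (subst card_image) (auto simp: inj_on_def)
  have "finite C" unfolding C_def by (simp add: finite_list_length)
  have "C \<subseteq> good_middles u k b m \<union> (\<Union>p\<in>{k<..<L + m - k}. Bad p)"
    using \<open>k < m\<close> \<open>k \<noteq> 0\<close> unfolding C_def good_middles_def Bad_def L_def by auto
  then have "card C \<le> card (good_middles u k b m \<union> (\<Union>p\<in>{k<..<L + m - k}. Bad p))"
    using finite_list_length[of m] \<open>finite C\<close>
    by (intro card_mono) (auto simp: Bad_def C_def good_middles_def intro: finite_subset)
  also have "\<dots> \<le> card (good_middles u k b m) + (\<Sum>p\<in>{k<..<L + m - k}. card (Bad p))"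
    using card_Un_le card_UN_le[of "{k<..<L + m - k}" Bad] by (meson add_left_mono finite_greaterThanLessThan le_trans)
  also have "(\<Sum>p\<in>{k<..<L + m - k}. card (Bad p)) \<le> 2 * L * q ^ (m - k - 1) + (m + 1) * q ^ (m - L)"
    using sum_card_occurs_at_le[OF \<open>length u \<le> m\<close>] unfolding Bad_def L_def q_def .
  finally have "q ^ (m - 2) \<le> card (good_middles u k b m) + (2 * L * q ^ (m - k - 1) + (m + 1) * q ^ (m - L))"
    using \<open>card C = q ^ (m - 2)\<close> by simp
  moreover have "4 * (2 * L * q ^ (m - k - 1)) \<le> q ^ (m - 2)"
  proof -
    have "4 * (2 * L * q ^ (m - k - 1)) \<le> q ^ (k - 1) * q ^ (m - k - 1)"
      using short unfolding L_def q_def by simp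
    also have "\<dots> = q ^ (m - 2)"
      using \<open>k \<noteq> 0\<close> \<open>k < m\<close> by (simp flip: power_add)
    finally show ?thesis .
  qed
  moreover have "4 * ((m + 1) * q ^ (m - L)) \<le> q ^ (m - 2)"
  proof -
    have "4 * ((m + 1) * q ^ (m - L)) = (4 * (m + 1)) * q ^ (m - L)" by (simp only: mult.assoc)
    also have "\<dots> \<le> q ^ (L - 2) * q ^ (m - L)"
      using long unfolding L_def q_def by (rule mult_right_mono) simp
    also have "\<dots> = q ^ (m - 2)"
      using \<open>2 \<le> length u\<close> \<open>length u \<le> m\<close> unfolding L_def by (simp flip: power_add)
    finally show ?thesis .
  qed
  ultimately show ?thesis unfolding q_def by linarith
qed

lemma card_framed_privileged_extension:
  assumes "b \<noteq> a" "1 \<le> k" "k < m" "2 \<le> L" "L \<le> m"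
    and "8 * L \<le> CARD('a) ^ (k - 1)" "4 * (m + 1) \<le> CARD('a) ^ (L - 2)"
  shows "card (framed_privileged k a L :: 'a::finite list set) * CARD('a) ^ (m - 2)
           \<le> 2 * card (framed_privileged k a (2 * L + m))"
proof -
  define U where "U = (framed_privileged k a L :: 'a list set)"
  define W where "W = (SIGMA u:U. good_middles u k b m)"
  have "finite U" using finite_list_length[of L] unfolding U_def framed_privileged_def by (auto intro: finite_subset)
  have good_ge: "CARD('a) ^ (m - 2) \<le> 2 * card (good_middles u k b m)" if "u \<in> U" for u
    using that assms unfolding U_def framed_privileged_def
    by (intro card_good_middles_ge) auto
  have "finite (good_middles u k b m)" for u
    unfolding good_middles_def by (simp add: finite_list_length)
  then have "card W = (\<Sum>u\<in>U. card (good_middles u k b m))"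
    unfolding W_def using \<open>finite U\<close> by (simp add: card_SigmaI)
  then have "card U * CARD('a) ^ (m - 2) \<le> 2 * card W"
    using sum_mono[of U "\<lambda>_. CARD('a) ^ (m - 2)" "\<lambda>u. 2 * card (good_middles u k b m)"] good_ge
    by (simp add: sum_distrib_left)
  also have "card W = card ((\<lambda>(u, v). u @ v @ u) ` W)"
  proof (rule card_image[symmetric], rule inj_onI, clarify)
    fix u v u' v' assume "(u, v) \<in> W" "(u', v') \<in> W" and eq: "u @ v @ u = u' @ v' @ u'"
    then have "length u = length u'" unfolding W_def U_def framed_privileged_def by auto
    then show "u = u' \<and> v = v'" using eq by simp
  qed
  also have "\<dots> \<le> card (framed_privileged k a (2 * L + m))"
  proof (rule card_mono)
    show "finite (framed_privileged k a (2 * L + m) :: 'a list set)"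
      using finite_list_length[of "2 * L + m"] unfolding framed_privileged_def by (auto intro: finite_subset)
    show "(\<lambda>(u, v). u @ v @ u) ` W \<subseteq> framed_privileged k a (2 * L + m)"
      using good_middle_extends_framed_privileged[OF _ \<open>1 \<le> k\<close> \<open>b \<noteq> a\<close>] \<open>k < m\<close> \<open>1 \<le> k\<close>
      unfolding W_def U_def by auto
  qed
  finally show ?thesis unfolding U_def by simp
qed

lemma card_privileged_two_level:
  assumes "2 \<le> CARD('a::finite)" "2 \<le> k" "3 * k < l" "3 * l \<le> n"
    and "8 * l \<le> CARD('a) ^ (k - 1)" "4 * l \<le> CARD('a) ^ (k - 2)" "4 * n \<le> CARD('a) ^ (l - 2)"
  shows "CARD('a) ^ (n - l - 2 * k - 4) \<le> 4 * card {w :: 'a list. length w = n \<and> privileged w}"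
proof -
  define q where "q = CARD('a)"
  obtain a b :: 'a where "b \<noteq> a"
    using \<open>2 \<le> CARD('a)\<close> card_le_Suc0_iff_eq[of "UNIV :: 'a set"] by auto
  have "replicate k a \<in> framed_privileged k a k"
    unfolding framed_privileged_def by (simp add: privileged_replicate)
  moreover have "finite (framed_privileged k a k :: 'a list set)"
    using finite_list_length[of k] unfolding framed_privileged_def by (auto intro: finite_subset)
  ultimately have "1 \<le> card (framed_privileged k a k)"
    by (auto simp: Suc_le_eq card_gt_0_iff)
  have level1: "card (framed_privileged k a k) * q ^ (l - 2 * k - 2)
      \<le> 2 * card (framed_privileged k a (2 * k + (l - 2 * k)))"
    unfolding q_def using assms \<open>b \<noteq> a\<close>
    by (intro card_framed_privileged_extension) auto
  have level2: "card (framed_privileged k a l) * q ^ (n - 2 * l - 2)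
      \<le> 2 * card (framed_privileged k a (2 * l + (n - 2 * l)))"
    unfolding q_def using assms \<open>b \<noteq> a\<close>
    by (intro card_framed_privileged_extension) auto
  have "q ^ (l - 2 * k - 2) * q ^ (n - 2 * l - 2)
      \<le> (card (framed_privileged k a k) * q ^ (l - 2 * k - 2)) * q ^ (n - 2 * l - 2)"
    using \<open>1 \<le> card (framed_privileged k a k)\<close> by simp
  also have "\<dots> \<le> (2 * card (framed_privileged k a l)) * q ^ (n - 2 * l - 2)"
    using level1 \<open>3 * k < l\<close> by (intro mult_right_mono) simp_all
  also have "\<dots> \<le> 2 * (2 * card (framed_privileged k a n))"
    using level2 \<open>3 * l \<le> n\<close> by simp
  also have "\<dots> \<le> 4 * card {w :: 'a list. length w = n \<and> privileged w}"
    using finite_list_length[of n] unfolding framed_privileged_def by (auto intro: card_mono finite_subset)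
  finally have "q ^ (l - 2 * k - 2) * q ^ (n - 2 * l - 2) \<le> 4 * card {w :: 'a list. length w = n \<and> privileged w}" .
  moreover have "l - 2 * k - 2 + (n - 2 * l - 2) = n - l - 2 * k - 4"
    using assms(2-4) by linarith
  ultimately show ?thesis unfolding q_def by (simp flip: power_add)
qed

lemma linear_le_two_power: "7 \<le> s \<Longrightarrow> 3 * s + 16 \<le> (2::nat) ^ s"
  by (induction s rule: dec_induct) auto

lemma card_privileged_ge_power:
  assumes q: "2 \<le> CARD('a::finite)" and n: "CARD('a) ^ 30 \<le> n"
  shows "CARD('a) ^ n
           \<le> 4 * CARD('a) ^ 19 * n * (floorlog CARD('a) n + 4)\<^sup>2 * card {w :: 'a list. length w = n \<and> privileged w}"
proof -
  define q where "q = CARD('a)"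
  define F where "F = floorlog q n"
  define l where "l = F + 4"
  define G where "G = floorlog q l"
  define k where "k = G + 4"
  have "1 < q" using q unfolding q_def by simp
  have "q ^ 30 \<le> n" using n unfolding q_def .
  moreover have "0 < q ^ 30" using \<open>1 < q\<close> by simp
  ultimately have "0 < n" by linarith
  have F: "q ^ (F - 1) \<le> n" "n < q ^ F"
    using floorlog_bounds[OF \<open>0 < n\<close> \<open>1 < q\<close>] unfolding F_def by auto
  have "0 < l" unfolding l_def by simp
  have G: "q ^ (G - 1) \<le> l" "l < q ^ G"
    using floorlog_bounds[OF \<open>0 < l\<close> \<open>1 < q\<close>] unfolding G_def by auto
  have "q ^ 30 < q ^ F" using \<open>q ^ 30 \<le> n\<close> F(2) by (rule le_less_trans)
  then have "30 < F" by (rule power_less_imp_less_exp[OF \<open>1 < q\<close>])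
  have pow2_le: "2 ^ i \<le> q ^ i" for i using q unfolding q_def by (simp add: power_mono)
  have "3 * (F - 1) + 16 \<le> n"
    using linear_le_two_power[of "F - 1"] pow2_le[of "F - 1"] F(1) \<open>30 < F\<close> by linarith
  then have "3 * l \<le> n" using \<open>30 < F\<close> unfolding l_def by arith
  have "3 * k < l"
  proof (cases "G - 1 \<le> 6")
    case True
    then show ?thesis using \<open>30 < F\<close> unfolding k_def l_def by arith
  next
    case False
    then show ?thesis
      using linear_le_two_power[of "G - 1"] pow2_le[of "G - 1"] G(1) unfolding k_def l_def by arith
  qed
  have "k - 1 = 3 + G" "k - 2 = 2 + G" "l - 2 = 2 + F" unfolding k_def l_def by simp_all
  then have pow_eqs: "q ^ (k - 1) = q ^ 3 * q ^ G" "q ^ (k - 2) = q ^ 2 * q ^ G" "q ^ (l - 2) = q ^ 2 * q ^ F"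
    by (simp_all only: power_add)
  have "8 * l \<le> q ^ (k - 1)"
    unfolding pow_eqs using pow2_le[of 3] G(2) by (intro mult_mono) auto
  moreover have "4 * l \<le> q ^ (k - 2)"
    unfolding pow_eqs using pow2_le[of 2] G(2) by (intro mult_mono) auto
  moreover have "4 * n \<le> q ^ (l - 2)"
    unfolding pow_eqs using pow2_le[of 2] F(2) by (intro mult_mono) auto
  moreover have "2 \<le> k" unfolding k_def by simp
  ultimately have two_level: "q ^ (n - l - 2 * k - 4) \<le> 4 * card {w :: 'a list. length w = n \<and> privileged w}"
    unfolding q_def using card_privileged_two_level q \<open>3 * k < l\<close> \<open>3 * l \<le> n\<close> by blast
  have rest: "q ^ (l + 2 * k + 4) \<le> q ^ 19 * n * l\<^sup>2"
  proof -
    have "0 < G" using G(2) unfolding l_def by (cases G) auto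
    then have "l + 2 * k + 4 = 19 + (F - 1) + (G - 1) * 2"
      using \<open>30 < F\<close> unfolding k_def l_def by arith
    then have "q ^ (l + 2 * k + 4) = q ^ 19 * q ^ (F - 1) * (q ^ (G - 1))\<^sup>2"
      by (simp only: power_add power_mult)
    also have "\<dots> \<le> q ^ 19 * n * l\<^sup>2"
      using F(1) G(1) by (intro mult_mono power_mono) auto
    finally show ?thesis .
  qed
  have "n = (n - l - 2 * k - 4) + (l + 2 * k + 4)"
    using \<open>2 \<le> k\<close> \<open>3 * k < l\<close> \<open>3 * l \<le> n\<close> by linarith
  then have "q ^ n = q ^ (n - l - 2 * k - 4) * q ^ (l + 2 * k + 4)"
    by (metis power_add)
  also have "\<dots> \<le> (4 * card {w :: 'a list. length w = n \<and> privileged w}) * (q ^ 19 * n * l\<^sup>2)"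
    using two_level rest by (rule mult_le_mono)
  finally show ?thesis unfolding q_def F_def l_def by (simp add: mult_ac)
qed

lemma floorlog_add_four_le_log:
  assumes "1 < b" "b \<le> n"
  shows "real (floorlog b n + 4) \<le> 6 * log b n"
proof -
  have "b ^ (floorlog b n - 1) \<le> n" "n < b ^ floorlog b n"
    using floorlog_bounds[of n b] assms by auto
  then have "1 < floorlog b n"
    using assms by (metis le_less_trans less_one nat_neq_iff power_0 power_one_right)
  have "real (floorlog b n - 1) \<le> log b n"
    using \<open>b ^ (floorlog b n - 1) \<le> n\<close> assms(1)
    by (intro le_log_of_power) (simp_all flip: of_nat_power)
  then show ?thesis using \<open>1 < floorlog b n\<close> by linarith
qed

lemma card_privileged_ge_real:
  assumes q: "2 \<le> CARD('a::finite)" and n: "CARD('a) ^ 30 \<le> n"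
  shows "real CARD('a) ^ n
           \<le> 144 * real CARD('a) ^ 19 * (real n * (log CARD('a) n)\<^sup>2)
               * card {w :: 'a list. length w = n \<and> privileged w}"
proof -
  define q where "q = CARD('a)"
  define P where "P = card {w :: 'a list. length w = n \<and> privileged w}"
  have "q \<le> q ^ 30" using q unfolding q_def by (simp add: self_le_power)
  then have "real (floorlog q n + 4) \<le> 6 * log q n"
    using q n unfolding q_def by (intro floorlog_add_four_le_log) auto
  then have "real (floorlog q n + 4) ^ 2 \<le> (6 * log q n) ^ 2"
    by (intro power_mono) auto
  have "real (q ^ n) \<le> real (4 * q ^ 19 * n * (floorlog q n + 4) ^ 2 * P)"
    using card_privileged_ge_power[OF q n] unfolding q_def P_def by (simp only: of_nat_le_iff)
  then have "real q ^ n \<le> 4 * real q ^ 19 * real n * real (floorlog q n + 4) ^ 2 * real P"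
    by simp
  also have "\<dots> \<le> 4 * real q ^ 19 * real n * (6 * log q n) ^ 2 * real P"
    using \<open>real (floorlog q n + 4) ^ 2 \<le> (6 * log q n) ^ 2\<close>
    by (intro mult_right_mono mult_left_mono) auto
  finally show ?thesis unfolding q_def P_def by (simp add: power_mult_distrib mult_ac)
qed

theorem theorem1:
  fixes \<Sigma> :: "'a::finite itself"
  assumes "card (UNIV :: 'a set) \<ge> 2"
  shows "\<exists>c::real. c > 0 \<and> (\<exists>n0::nat. \<forall>n\<ge>n0.
           real (card {w :: 'a list. length w = n \<and> privileged w})
             \<ge> c * real (card (UNIV :: 'a set)) ^ n / (real n * (log (real (card (UNIV :: 'a set))) (real n))\<^sup>2))"
proof (intro exI conjI allI impI)
  define q where "q = CARD('a)"
  show "1 / (144 * real q ^ 19) > 0" unfolding q_def by simp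
  fix n assume n: "q ^ 30 \<le> n"
  have "1 < q" "q \<le> n"
    using assms n self_le_power[of q 30] unfolding q_def by auto
  then have "0 < log q n" by simp
  have D: "0 < real n * (log q n)\<^sup>2"
    using \<open>1 < q\<close> \<open>q \<le> n\<close> zero_less_power[OF \<open>0 < log q n\<close>, of 2] by simp
  have "real q ^ n / (144 * real q ^ 19)
      \<le> (real n * (log q n)\<^sup>2) * real (card {w :: 'a list. length w = n \<and> privileged w})"
    using card_privileged_ge_real[OF assms n[unfolded q_def]] unfolding q_def
    by (simp add: divide_le_eq mult_ac)
  then have "real q ^ n / (144 * real q ^ 19) / (real n * (log q n)\<^sup>2)
      \<le> real (card {w :: 'a list. length w = n \<and> privileged w})"
    using D by (metis pos_divide_le_eq mult.commute)
  then show "1 / (144 * real q ^ 19) * real q ^ n / (real n * (log q n)\<^sup>2)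
               \<le> real (card {w :: 'a list. length w = n \<and> privileged w})"
    by simp
qed

end
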